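(* Let $n\in\mathbb{N}$ and let $v(z)=\big(\log\frac{e}{1-|z|}\big)^{-n}$ for $z\in\mathbb{D}$. Then $\sup_{t\in[0,1)}\|C_t\|_{H^\infty_v\to H^\infty_v}=\infty$.
   Context: $\mathbb{D}=\{z\in\mathbb{C}:|z|<1\}$ and $H(\mathbb{D})$ is the space of holomorphic functions on $\mathbb{D}$. For a weight $v$ (continuous non-increasing $v\colon[0,1)\to(0,\infty)$, with $v(z):=v(|z|)$), $H^\infty_v=\{f\in H(\mathbb{D}):\|f\|_{\infty,v}:=\sup_{z\in\mathbb{D}}|f(z)|v(z)<\infty\}$ with norm $\|\cdot\|_{\infty,v}$. For $t\in[0,1)$ the generalized Cesàro operator $C_t$ is defined on $f\in H(\mathbb{D})$ by $C_tf(0)=f(0)$ and $C_tf(z)=\frac{1}{z}\int_0^z\frac{f(\xi)}{1-t\xi}\,d\xi$ for $z\neq0$; it is a bounded operator on $H^\infty_v$. *)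

theory Defs
  imports "HOL-Complex_Analysis.Complex_Analysis" "HOL-Library.Extended_Real"
begin

text \<open>Weight v : [0,1) -> (0,oo), extended radially to the disc by v(z) = v(|z|).\<close>

definition log_weight :: "nat \<Rightarrow> real \<Rightarrow> real" where
  "log_weight n r = inverse ((ln (exp 1 / (1 - r))) ^ n)"

definition wnorm :: "(real \<Rightarrow> real) \<Rightarrow> (complex \<Rightarrow> complex) \<Rightarrow> ereal" where
  "wnorm v f = (SUP z\<in>ball 0 1. ereal (norm (f z) * v (norm z)))"

definition Hinf_v :: "(real \<Rightarrow> real) \<Rightarrow> (complex \<Rightarrow> complex) set" where
  "Hinf_v v = {f. f holomorphic_on ball 0 1 \<and> wnorm v f < \<infinity>}"

definition cesaro :: "real \<Rightarrow> (complex \<Rightarrow> complex) \<Rightarrow> complex \<Rightarrow> complex" where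
  "cesaro t f z = (if z = 0 then f 0
     else (1 / z) * contour_integral (linepath 0 z) (\<lambda>\<xi>. f \<xi> / (1 - complex_of_real t * \<xi>)))"

definition cesaro_opnorm :: "(real \<Rightarrow> real) \<Rightarrow> real \<Rightarrow> ereal" where
  "cesaro_opnorm v t = (SUP f\<in>{f\<in>Hinf_v v. wnorm v f \<le> 1}. wnorm v (cesaro t f))"

end

theory Submission
  imports Defs
begin

text \<open>
  Take the test function \<open>f(z) = ((1 - Log(1 - z)) / 5)^n\<close>. Since
  \<open>|1 - Log(1 - z)| \<le> 5 log(e / (1 - |z|))\<close> on the disc, \<open>f\<close> lies in the unit ball
  of \<open>H\<^sup>\<infinity>\<^sub>v\<close>. On the segment \<open>[0, 1)\<close> everything is real and positive: with
  \<open>A(s) = log(e / (1 - s x))\<close>,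
  \<open>C\<^sub>x f(x) = \<integral>\<^sub>0\<^sup>1 (A(s)/5)^n / (1 - x\<^sup>2 s) ds \<ge> \<integral>\<^sub>0\<^sup>1 A(s)^n / (2 \<cdot> 5^n (1 - s x)) ds\<close>,
  and the right-hand integrand has the explicit primitive \<open>A(s)^(n+1) / (2 (n+1) 5^n x)\<close>.
  Hence \<open>v(x) |C\<^sub>x f(x)| \<ge> log(1 / (1 - x)) / (2 (n+1) 5^n)\<close>, which is unbounded as
  \<open>x \<rightarrow> 1\<close>.
\<close>

lemma log_weight_eq: "r < 1 \<Longrightarrow> log_weight n r = inverse ((1 - ln (1 - r)) ^ n)"
  unfolding log_weight_def by (simp add: ln_div)

definition log_test_fun :: "nat \<Rightarrow> complex \<Rightarrow> complex" where
  "log_test_fun n z = ((1 - Ln (1 - z)) / 5) ^ n"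

lemma Re_one_minus_pos: "z \<in> ball 0 1 \<Longrightarrow> 0 < Re (1 - z)"
  using complex_Re_le_cmod[of z] by simp

lemma holomorphic_log_test_fun: "log_test_fun n holomorphic_on ball 0 1"
proof -
  have "(\<lambda>z. ((1 - Ln (1 - z)) / 5) ^ n) holomorphic_on ball 0 1"
  proof (intro holomorphic_intros)
    fix z :: complex
    assume "z \<in> ball 0 1"
    then show "1 - z \<notin> \<real>\<^sub>\<le>\<^sub>0"
      using Re_one_minus_pos[of z] by (auto simp: complex_nonpos_Reals_iff)
  qed simp
  then show ?thesis
    unfolding log_test_fun_def[abs_def] .
qed

lemma log_test_fun_of_real:
  assumes "y < 1"
  shows "log_test_fun n (of_real y) = of_real (((1 - ln (1 - y)) / 5) ^ n)"
proof -
  have "Ln (1 - of_real y) = of_real (ln (1 - y))"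
    using Ln_of_real[of "1 - y"] assms by simp
  then show ?thesis
    by (simp add: log_test_fun_def)
qed

lemma norm_one_minus_Ln_le:
  assumes "z \<in> ball 0 1"
  shows "norm (1 - Ln (1 - z)) \<le> 5 * (1 - ln (1 - norm z))"
proof -
  define L where "L = 1 - ln (1 - norm z)"
  have z1: "norm z < 1"
    using assms by simp
  then have "ln (1 - norm z) \<le> 0"
    by simp
  then have L1: "1 \<le> L"
    by (simp add: L_def)
  have Re_pos: "0 < Re (1 - z)"
    using Re_one_minus_pos[OF assms] .
  have "norm (1 - z) \<le> 2"
    using z1 norm_triangle_ineq4[of 1 z] by simp
  moreover have "1 - norm z \<le> norm (1 - z)"
    using norm_triangle_ineq2[of 1 z] by simp
  moreover have "1 - z \<noteq> 0"
    using Re_pos by auto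
  ultimately have "\<bar>ln (norm (1 - z))\<bar> \<le> L"
  proof (cases "1 \<le> norm (1 - z)")
    case True
    then have "ln (norm (1 - z)) \<le> ln 2"
      using \<open>norm (1 - z) \<le> 2\<close> by (subst ln_le_cancel_iff) auto
    then show ?thesis
      using True ln_2_less_1 L1 by simp
  next
    case False
    then have "ln (1 - norm z) \<le> ln (norm (1 - z))"
      using \<open>1 - norm z \<le> norm (1 - z)\<close> z1 by (subst ln_le_cancel_iff) auto
    then show ?thesis
      using False \<open>1 - z \<noteq> 0\<close> by (simp add: L_def)
  qed
  moreover have "\<bar>Im (Ln (1 - z))\<bar> \<le> pi / 2"
    using Re_Ln_pos_lt_imp[OF Re_pos] by simp
  ultimately have "norm (Ln (1 - z)) \<le> L + pi / 2"
    using cmod_le[of "Ln (1 - z)"] Re_Ln[OF \<open>1 - z \<noteq> 0\<close>] by simp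
  then have "norm (1 - Ln (1 - z)) \<le> 1 + L + pi / 2"
    using norm_triangle_ineq4[of 1 "Ln (1 - z)"] by simp
  also have "\<dots> \<le> 5 * L"
    using L1 pi_less_4 by simp
  finally show ?thesis
    by (simp add: L_def)
qed

lemma weighted_norm_log_test_fun_le:
  assumes "z \<in> ball 0 1"
  shows "norm (log_test_fun n z) * log_weight n (norm z) \<le> 1"
proof -
  define L where "L = 1 - ln (1 - norm z)"
  have z1: "norm z < 1"
    using assms by simp
  then have "ln (1 - norm z) \<le> 0"
    by simp
  then have L_pos: "0 < L"
    by (simp add: L_def)
  have "norm (log_test_fun n z) \<le> L ^ n"
    unfolding log_test_fun_def norm_power
    using norm_one_minus_Ln_le[OF assms] by (intro power_mono) (auto simp: L_def)
  then show ?thesis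
    using L_pos by (simp add: log_weight_eq[OF z1] L_def[symmetric] field_simps)
qed

lemma log_test_fun_in_unit_ball:
  "log_test_fun n \<in> Hinf_v (log_weight n)" "wnorm (log_weight n) (log_test_fun n) \<le> 1"
proof -
  show "wnorm (log_weight n) (log_test_fun n) \<le> 1"
    unfolding wnorm_def by (rule SUP_least) (simp add: weighted_norm_log_test_fun_le)
  then show "log_test_fun n \<in> Hinf_v (log_weight n)"
    unfolding Hinf_v_def using holomorphic_log_test_fun by (auto simp: order_le_less_trans)
qed

lemma cesaro_of_real_eq_integral:
  assumes "0 < x"
    and "\<And>y. y \<in> {0..x} \<Longrightarrow> f (of_real y) = of_real (g y)"
    and "((\<lambda>s. g (s * x) / (1 - t * (s * x))) has_integral J) {0..1}"
  shows "cesaro t f (of_real x) = of_real J"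
proof -
  have linepath_eq: "linepath 0 (of_real x) s = of_real (s * x)" for s
    by (simp add: linepath_def scaleR_conv_of_real)
  have integrand_eq: "f (linepath 0 (of_real x) s) / (1 - of_real t * linepath 0 (of_real x) s)
      * (of_real x - 0) = of_real (g (s * x) / (1 - t * (s * x))) * of_real x"
    if "s \<in> {0..1}" for s
  proof -
    have "s * x \<in> {0..x}"
      using that assms(1) by (auto simp: mult_left_le_one_le)
    then have "f (of_real (s * x)) = of_real (g (s * x))"
      by (rule assms(2))
    then show ?thesis
      unfolding linepath_eq by simp
  qed
  have "((\<lambda>s. of_real (g (s * x) / (1 - t * (s * x))) * of_real x :: complex)
      has_integral of_real J * of_real x) {0..1}"
    by (intro has_integral_mult_left has_integral_of_real assms(3))
  then have "((\<lambda>\<xi>. f \<xi> / (1 - of_real t * \<xi>)) has_contour_integral of_real J * of_real x)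
      (linepath 0 (of_real x))"
    unfolding has_contour_integral_linepath
    by (rule has_integral_eq[rotated]) (rule integrand_eq[symmetric])
  then show ?thesis
    using assms(1) by (simp add: cesaro_def contour_integral_unique)
qed

lemma one_minus_mult_le_twice_one_minus:
  fixes x y :: real
  assumes "0 \<le> y" "y \<le> x" "x \<le> 1"
  shows "1 - x * y \<le> 2 * (1 - y)"
proof -
  have "y * (2 - x) \<le> x * (2 - x)"
    using assms by (intro mult_right_mono) auto
  also have "\<dots> \<le> 1"
    using power2_diff[of x 1] zero_le_power2[of "x - 1"] by (simp add: algebra_simps power2_eq_square)
  finally show ?thesis
    by (simp add: algebra_simps)
qed

lemma log_integrand_integral_ge:
  fixes x :: real
  assumes x: "0 < x" "x < 1"
    and J: "((\<lambda>s. ((1 - ln (1 - s * x)) / 5) ^ n / (1 - x * (s * x))) has_integral J) {0..1}"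
  shows "((1 - ln (1 - x)) ^ Suc n - 1) / (2 * real (Suc n) * 5 ^ n) \<le> J"
proof -
  define A where "A s = 1 - ln (1 - s * x)" for s
  define c where "c = 2 * real (Suc n) * 5 ^ n"
  have c_pos: "0 < c"
    unfolding c_def by (intro mult_pos_pos) auto
  have sx: "0 \<le> s * x" "s * x \<le> x" "s * x < 1" if "s \<in> {0..1}" for s
  proof -
    show "0 \<le> s * x" "s * x \<le> x"
      using that x by (auto simp: mult_left_le_one_le)
    then show "s * x < 1"
      using x by linarith
  qed
  have A_ge_1: "1 \<le> A s" if "s \<in> {0..1}" for s
  proof -
    have "ln (1 - s * x) \<le> 0"
      using sx[OF that] x by (subst ln_le_zero_iff) linarith+
    then show ?thesis
      by (simp add: A_def)
  qed
  have "((\<lambda>s. A s ^ Suc n / (c * x)) has_real_derivative A s ^ n / (2 * 5 ^ n * (1 - s * x)))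
      (at s within {0..1})" if "s \<in> {0..1}" for s
  proof -
    have q: "1 - s * x \<noteq> 0"
      using sx(3)[OF that] by simp
    have "(A has_real_derivative x / (1 - s * x)) (at s within {0..1})"
      unfolding A_def using sx(3)[OF that] by (auto intro!: derivative_eq_intros simp: field_simps)
    then have "((\<lambda>s. A s ^ Suc n / (c * x)) has_real_derivative
        (1 + real n) * (x / (1 - s * x) * A s ^ n) / (c * x)) (at s within {0..1})"
      by (intro DERIV_cdivide DERIV_power_Suc)
    moreover have "(1 + real n) * (x / (1 - s * x) * A s ^ n) / (c * x)
        = A s ^ n / (2 * 5 ^ n * (1 - s * x))"
      using x q unfolding c_def by (simp add: divide_simps) (simp add: algebra_simps)
    ultimately show ?thesis
      by simp
  qed
  then have primitive: "((\<lambda>s. A s ^ n / (2 * 5 ^ n * (1 - s * x))) has_integral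
      A 1 ^ Suc n / (c * x) - A 0 ^ Suc n / (c * x)) {0..1}"
    by (intro fundamental_theorem_of_calculus)
      (auto simp: has_real_derivative_iff_has_vector_derivative)
  have integrand_le: "A s ^ n / (2 * 5 ^ n * (1 - s * x)) \<le> (A s / 5) ^ n / (1 - x * (s * x))"
    if "s \<in> {0..1}" for s
  proof -
    have "x * (s * x) \<le> s * x"
      using sx(1)[OF that] x by (simp add: mult_left_le_one_le)
    then have "0 < 1 - x * (s * x)"
      using sx(3)[OF that] by linarith
    moreover have "1 - x * (s * x) \<le> 2 * (1 - s * x)"
      using sx[OF that] x by (intro one_minus_mult_le_twice_one_minus) auto
    ultimately have le: "5 ^ n * (1 - x * (s * x)) \<le> 2 * 5 ^ n * (1 - s * x)"
      and pos: "0 < 2 * 5 ^ n * (1 - s * x) * (5 ^ n * (1 - x * (s * x)))"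
      by simp_all
    have "0 \<le> A s ^ n"
      using A_ge_1[OF that] by simp
    then show ?thesis
      unfolding power_divide divide_divide_eq_left by (rule divide_left_mono[OF le _ pos])
  qed
  have "A 1 ^ Suc n / (c * x) - A 0 ^ Suc n / (c * x) \<le> J"
    by (rule has_integral_le[OF primitive J[folded A_def] integrand_le])
  moreover have "1 \<le> A 1 ^ Suc n"
    using A_ge_1[of 1] by (intro one_le_power) simp
  then have "(A 1 ^ Suc n - 1) / c \<le> (A 1 ^ Suc n - 1) / (c * x)"
    using x c_pos by (intro divide_left_mono) (auto simp: mult_left_le)
  ultimately show ?thesis
    by (simp add: A_def c_def diff_divide_distrib)
qed

lemma cesaro_log_test_fun_ge:
  assumes x: "0 < x" "x < 1"
  shows "((1 - ln (1 - x)) ^ Suc n - 1) / (2 * real (Suc n) * 5 ^ n)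
    \<le> norm (cesaro x (log_test_fun n) (of_real x))"
proof -
  define g :: "real \<Rightarrow> real" where "g y = ((1 - ln (1 - y)) / 5) ^ n" for y
  have sx: "0 < 1 - s * x" "0 < 1 - x * (s * x)" if "s \<in> {0..1}" for s
  proof -
    have "0 \<le> s * x" "s * x \<le> x"
      using that x by (simp_all add: mult_left_le_one_le)
    moreover from this have "x * (s * x) \<le> s * x"
      using x by (simp add: mult_left_le_one_le)
    ultimately show "0 < 1 - s * x" "0 < 1 - x * (s * x)"
      using x by linarith+
  qed
  have "continuous_on {0..1} (\<lambda>s. g (s * x) / (1 - x * (s * x)))"
    unfolding g_def by (intro continuous_intros) (auto dest: sx)
  then obtain J where J: "((\<lambda>s. g (s * x) / (1 - x * (s * x))) has_integral J) {0..1}"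
    using integrable_continuous_interval by blast
  have "cesaro x (log_test_fun n) (of_real x) = of_real J"
    using J x by (intro cesaro_of_real_eq_integral) (auto simp: g_def log_test_fun_of_real)
  moreover have "((1 - ln (1 - x)) ^ Suc n - 1) / (2 * real (Suc n) * 5 ^ n) \<le> J"
    using J x unfolding g_def by (intro log_integrand_integral_ge)
  ultimately show ?thesis
    by simp
qed

lemma weighted_cesaro_log_test_fun_ge:
  assumes x: "0 < x" "x < 1"
  shows "- ln (1 - x) / (2 * real (Suc n) * 5 ^ n)
    \<le> norm (cesaro x (log_test_fun n) (of_real x)) * log_weight n x"
proof -
  define L where "L = 1 - ln (1 - x)"
  define c where "c = 2 * real (Suc n) * 5 ^ n"
  have c_pos: "0 < c"
    unfolding c_def by (intro mult_pos_pos) auto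
  have "ln (1 - x) \<le> 0"
    using x by simp
  then have "1 \<le> L ^ n"
    unfolding L_def by (intro one_le_power) simp
  then have "(L - 1) * L ^ n \<le> L ^ Suc n - 1"
    by (simp add: algebra_simps)
  then have "(L - 1) / c \<le> (L ^ Suc n - 1) / c * inverse (L ^ n)"
    using \<open>1 \<le> L ^ n\<close> c_pos by (simp add: field_simps)
  also have "\<dots> \<le> norm (cesaro x (log_test_fun n) (of_real x)) * inverse (L ^ n)"
    using cesaro_log_test_fun_ge[OF x, of n] \<open>1 \<le> L ^ n\<close>
    by (intro mult_right_mono) (simp_all add: L_def c_def)
  finally show ?thesis
    using log_weight_eq[OF x(2)] by (simp add: L_def c_def)
qed

lemma cesaro_opnorm_ge:
  assumes "f \<in> Hinf_v v" "wnorm v f \<le> 1" "z \<in> ball 0 1"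
  shows "ereal (norm (cesaro t f z) * v (norm z)) \<le> cesaro_opnorm v t"
proof -
  have "ereal (norm (cesaro t f z) * v (norm z)) \<le> wnorm v (cesaro t f)"
    unfolding wnorm_def using assms(3) by (rule SUP_upper)
  also have "\<dots> \<le> cesaro_opnorm v t"
    unfolding cesaro_opnorm_def using assms(1,2) by (intro SUP_upper) simp
  finally show ?thesis .
qed

theorem proposition2p12:
  fixes n :: nat
  assumes "n \<ge> 1"
  shows "(SUP t\<in>{0..<1::real}. cesaro_opnorm (log_weight n) t) = \<infinity>"
proof (rule SUP_PInfty)
  fix N :: nat
  define c where "c = 2 * real (Suc n) * 5 ^ n"
  define x where "x = 1 - exp (- (c * real (Suc N)))"
  have c_pos: "0 < c"
    unfolding c_def by (intro mult_pos_pos) auto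
  then have x: "0 < x" "x < 1"
    by (auto simp: x_def)
  have "ereal (real N) \<le> ereal (- ln (1 - x) / c)"
    using c_pos by (simp add: x_def)
  also have "\<dots> \<le> ereal (norm (cesaro x (log_test_fun n) (of_real x))
      * log_weight n (norm (complex_of_real x)))"
    using weighted_cesaro_log_test_fun_ge[OF x, of n] x by (simp add: c_def)
  also have "\<dots> \<le> cesaro_opnorm (log_weight n) x"
    using x by (intro cesaro_opnorm_ge log_test_fun_in_unit_ball) simp
  finally have "ereal (real N) \<le> cesaro_opnorm (log_weight n) x" .
  then show "\<exists>t\<in>{0..<1}. ereal (real N) \<le> cesaro_opnorm (log_weight n) t"
    using x by auto
qed

end
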